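(* Consider an $n$-player team problem with common cost $c$ satisfying Assumptions A1, A4 and A5. Let $\{\mu_m\}$ and $\mu$ be information structures satisfying Assumption A3 with $\mu_m\to\mu$ setwise. Then the team value function is upper semicontinuous along this sequence: $$\limsup_{m\to\infty}J^*(c,\mu_m)\le J^*(c,\mu).$$
   Context: $\mathbb{X},\mathbb{Y}^1,\dots,\mathbb{Y}^n$ are standard Borel spaces. An information structure is a probability measure $\mu$ on $\mathbb{X}\times\mathbb{Y}^1\times\cdots\times\mathbb{Y}^n$; its $\mathbb{X}$-marginal $\zeta$ is the prior. A team problem consists of standard Borel action spaces $\mathbb{U}^i$ and a common measurable cost $c:\mathbb{X}\times\mathbb{U}^1\times\cdots\times\mathbb{U}^n\to\mathbb{R}$; for a team policy $\bar\gamma=(\gamma^1,\dots,\gamma^n)$ with measurable $\gamma^i:\mathbb{Y}^i\to\mathbb{U}^i$, $J(c,\mu,\bar\gamma)=\int c(x,\gamma^1(y^1),\dots,\gamma^n(y^n))\,d\mu$, and $J^*(c,\mu)=\inf_{\bar\gamma}J(c,\mu,\bar\gamma)$. Setwise convergence: $\mu_m(A)\to\mu(A)$ for every Borel set $A$. Assumptions: A1: the cost is measurable and bounded. A3: $\mu\ll\zeta(dx)\bar Q^1(dy^1)\cdots\bar Q^n(dy^n)$ for some probability measures $\bar Q^i$ on $\mathbb{Y}^i$. A4: each action space is compact. A5: the bounded measurable cost is continuous in the players' actions for each fixed $x$, and each action space is compact. *)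

theory Defs
  imports "HOL-Probability.Probability"
begin

text \<open>Standard Borel spaces are modelled as Borel subsets of Polish spaces
  (every standard Borel space is Borel-isomorphic to such a set).
  Players are indexed by {..<n}.  X is the whole Polish type 'x (with borel),
  Y i a Borel subset of the Polish type 'y, and U i a subset of the Polish type 'u.\<close>

abbreviation Ysp :: "(nat \<Rightarrow> 'y::topological_space set) \<Rightarrow> nat \<Rightarrow> 'y measure" where
  "Ysp Y i \<equiv> restrict_space borel (Y i)"

abbreviation Usp :: "(nat \<Rightarrow> 'u::topological_space set) \<Rightarrow> nat \<Rightarrow> 'u measure" where
  "Usp U i \<equiv> restrict_space borel (U i)"

definition info_space :: "nat \<Rightarrow> (nat \<Rightarrow> 'y::topological_space set)
    \<Rightarrow> ('x::topological_space \<times> (nat \<Rightarrow> 'y)) measure" where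
  "info_space n Y = (borel::'x measure) \<Otimes>\<^sub>M (\<Pi>\<^sub>M i\<in>{..<n}. Ysp Y i)"

definition info_structure :: "nat \<Rightarrow> (nat \<Rightarrow> 'y::topological_space set)
    \<Rightarrow> ('x::topological_space \<times> (nat \<Rightarrow> 'y)) measure \<Rightarrow> bool" where
  "info_structure n Y \<mu> \<longleftrightarrow> prob_space \<mu> \<and> sets \<mu> = sets (info_space n Y)"

definition prior :: "('x::topological_space \<times> 'b) measure \<Rightarrow> 'x measure" where
  "prior \<mu> = distr \<mu> borel fst"

definition team_policy :: "nat \<Rightarrow> (nat \<Rightarrow> 'y::topological_space set)
    \<Rightarrow> (nat \<Rightarrow> 'u::topological_space set) \<Rightarrow> (nat \<Rightarrow> 'y \<Rightarrow> 'u) \<Rightarrow> bool" where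
  "team_policy n Y U \<gamma> \<longleftrightarrow> (\<forall>i<n. \<gamma> i \<in> Ysp Y i \<rightarrow>\<^sub>M Usp U i)"

definition team_cost :: "nat \<Rightarrow> ('x \<Rightarrow> (nat \<Rightarrow> 'u) \<Rightarrow> real)
    \<Rightarrow> ('x \<times> (nat \<Rightarrow> 'y)) measure \<Rightarrow> (nat \<Rightarrow> 'y \<Rightarrow> 'u) \<Rightarrow> real" where
  "team_cost n c \<mu> \<gamma> = (\<integral>z. c (fst z) (\<lambda>i\<in>{..<n}. \<gamma> i (snd z i)) \<partial>\<mu>)"

text \<open>J*(c,\<mu>) = inf over team policies (extended-real valued; infimum of the empty set is \<infinity>).\<close>
definition team_value :: "nat \<Rightarrow> (nat \<Rightarrow> 'y::topological_space set)
    \<Rightarrow> (nat \<Rightarrow> 'u::topological_space set) \<Rightarrow> ('x \<Rightarrow> (nat \<Rightarrow> 'u) \<Rightarrow> real)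
    \<Rightarrow> ('x \<times> (nat \<Rightarrow> 'y)) measure \<Rightarrow> ereal" where
  "team_value n Y U c \<mu> = (INF \<gamma>\<in>{\<gamma>. team_policy n Y U \<gamma>}. ereal (team_cost n c \<mu> \<gamma>))"

definition assumption_A3 :: "nat \<Rightarrow> (nat \<Rightarrow> 'y::topological_space set)
    \<Rightarrow> ('x::topological_space \<times> (nat \<Rightarrow> 'y)) measure \<Rightarrow> bool" where
  "assumption_A3 n Y \<mu> \<longleftrightarrow> (\<exists>Q::nat \<Rightarrow> 'y measure.
      (\<forall>i<n. prob_space (Q i) \<and> sets (Q i) = sets (Ysp Y i)) \<and>
      absolutely_continuous (prior \<mu> \<Otimes>\<^sub>M (\<Pi>\<^sub>M i\<in>{..<n}. Q i)) \<mu>)"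

definition assumption_A1 :: "nat \<Rightarrow> (nat \<Rightarrow> 'u::topological_space set)
    \<Rightarrow> ('x::topological_space \<Rightarrow> (nat \<Rightarrow> 'u) \<Rightarrow> real) \<Rightarrow> bool" where
  "assumption_A1 n U c \<longleftrightarrow>
     (\<lambda>(x,u). c x u) \<in> borel_measurable ((borel::'x measure) \<Otimes>\<^sub>M (\<Pi>\<^sub>M i\<in>{..<n}. Usp U i)) \<and>
     (\<exists>B. \<forall>x. \<forall>u\<in>(\<Pi>\<^sub>E i\<in>{..<n}. U i). \<bar>c x u\<bar> \<le> B)"

definition assumption_A4 :: "nat \<Rightarrow> (nat \<Rightarrow> 'u::topological_space set) \<Rightarrow> bool" where
  "assumption_A4 n U \<longleftrightarrow> (\<forall>i<n. compact (U i))"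

definition assumption_A5 :: "nat \<Rightarrow> (nat \<Rightarrow> 'u::topological_space set)
    \<Rightarrow> ('x::topological_space \<Rightarrow> (nat \<Rightarrow> 'u) \<Rightarrow> real) \<Rightarrow> bool" where
  "assumption_A5 n U c \<longleftrightarrow> assumption_A1 n U c \<and> assumption_A4 n U \<and>
     (\<forall>x. continuous_on (\<Pi>\<^sub>E i\<in>{..<n}. U i) (c x))"

definition setwise_conv :: "(nat \<Rightarrow> 'a measure) \<Rightarrow> 'a measure \<Rightarrow> bool" where
  "setwise_conv \<mu>s \<mu> \<longleftrightarrow> (\<forall>A\<in>sets \<mu>. (\<lambda>m. measure (\<mu>s m) A) \<longlonglongrightarrow> measure \<mu> A)"

end

theory Submission
  imports Defs
begin

text \<open>For a fixed team policy \<gamma> the integrand c(x, \<gamma>(y)) is bounded and measurable, and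
  setwise convergence gives convergence of integrals of bounded measurable functions: approximate
  them uniformly by simple functions, whose integrals are finite sums of measures of sets. Hence
  J(c, \<mu>_m, \<gamma>) \<longlonglongrightarrow> J(c, \<mu>, \<gamma>) for every \<gamma>, and the limsup of the infima over \<gamma> is
  at most the infimum of the limits. This direction needs only A1 and setwise convergence.\<close>

lemma (in finite_measure) integral_simple_function:
  fixes g :: "'a \<Rightarrow> real"
  assumes "simple_function M g"
  shows "(\<integral>x. g x \<partial>M) = (\<Sum>y\<in>g ` space M. measure M {x\<in>space M. g x = y} * y)"
proof -
  have "Bochner_Integration.simple_bochner_integrable M g"
    using assms by (simp add: Bochner_Integration.simple_bochner_integrable.simps)
  then show ?thesis
    by (simp add: simple_bochner_integrable_eq_integral[symmetric]
        Bochner_Integration.simple_bochner_integral_def)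
qed

lemma setwise_conv_tendsto_integral_simple_function:
  fixes g :: "'a \<Rightarrow> real"
  assumes N: "\<And>m. finite_measure (N m)" and sets_N: "\<And>m. sets (N m) = sets M"
    and M: "finite_measure M" and conv: "setwise_conv N M" and g: "simple_function M g"
  shows "(\<lambda>m. \<integral>x. g x \<partial>N m) \<longlonglongrightarrow> (\<integral>x. g x \<partial>M)"
proof -
  have space_N: "space (N m) = space M" for m
    using sets_N by (rule sets_eq_imp_space_eq)
  have "simple_function (N m) g" for m
    using g simple_function_cong_algebra[OF sets_N space_N] by blast
  then have "(\<integral>x. g x \<partial>N m) = (\<Sum>y\<in>g ` space M. measure (N m) {x\<in>space M. g x = y} * y)" for m
    using finite_measure.integral_simple_function[OF N] space_N by metis
  moreover have "{x\<in>space M. g x = y} \<in> sets M" for y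
    using simple_functionD(2)[OF g, of "{y}"] by (simp add: vimage_def Int_def conj_commute)
  ultimately show ?thesis
    using conv unfolding setwise_conv_def finite_measure.integral_simple_function[OF M g]
    by (auto intro!: tendsto_sum tendsto_mult_right)
qed

lemma uniform_simple_function_approx:
  fixes f :: "'a \<Rightarrow> real"
  assumes f: "f \<in> borel_measurable M" and bound: "\<forall>x\<in>space M. \<bar>f x\<bar> \<le> B" and "\<epsilon> > 0"
  obtains g where "simple_function M g" "\<forall>x\<in>space M. \<bar>f x - g x\<bar> \<le> \<epsilon>"
proof
  define g where "g x = \<epsilon> * \<lfloor>f x / \<epsilon>\<rfloor>" for x
  have "g ` space M \<subseteq> (\<lambda>j. \<epsilon> * of_int j) ` {\<lfloor>- B / \<epsilon>\<rfloor>..\<lfloor>B / \<epsilon>\<rfloor>}"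
  proof
    fix y assume "y \<in> g ` space M"
    then obtain x where x: "x \<in> space M" "y = g x" by blast
    have "\<bar>f x\<bar> \<le> B"
      using bound x by blast
    then have "- B / \<epsilon> \<le> f x / \<epsilon>" "f x / \<epsilon> \<le> B / \<epsilon>"
      using \<open>\<epsilon> > 0\<close> by (simp_all add: divide_le_eq le_divide_eq abs_le_iff)
    then show "y \<in> (\<lambda>j. \<epsilon> * of_int j) ` {\<lfloor>- B / \<epsilon>\<rfloor>..\<lfloor>B / \<epsilon>\<rfloor>}"
      using x unfolding g_def by (auto intro!: floor_mono)
  qed
  then have "finite (g ` space M)"
    by (rule finite_subset) simp
  moreover have "g \<in> borel_measurable M"
    unfolding g_def using f by measurable
  ultimately show "simple_function M g"
    by (rule simple_function_borel_measurable[rotated])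
  have "0 \<le> f x - g x" "f x - g x \<le> \<epsilon>" for x
  proof -
    have "\<epsilon> * of_int \<lfloor>f x / \<epsilon>\<rfloor> \<le> \<epsilon> * (f x / \<epsilon>)"
      using \<open>\<epsilon> > 0\<close> by (intro mult_left_mono) simp_all
    moreover have "\<epsilon> * (f x / \<epsilon>) < \<epsilon> * (of_int \<lfloor>f x / \<epsilon>\<rfloor> + 1)"
      using \<open>\<epsilon> > 0\<close> by (intro mult_strict_left_mono) simp_all
    ultimately show "0 \<le> f x - g x" "f x - g x \<le> \<epsilon>"
      using \<open>\<epsilon> > 0\<close> unfolding g_def by (simp_all add: algebra_simps)
  qed
  then show "\<forall>x\<in>space M. \<bar>f x - g x\<bar> \<le> \<epsilon>"
    by (simp add: abs_le_iff)
qed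

lemma (in prob_space) abs_integral_diff_le:
  fixes f g :: "'a \<Rightarrow> real"
  assumes "integrable M f" "integrable M g" "\<forall>x\<in>space M. \<bar>f x - g x\<bar> \<le> \<epsilon>"
  shows "\<bar>(\<integral>x. f x \<partial>M) - (\<integral>x. g x \<partial>M)\<bar> \<le> \<epsilon>"
proof -
  have "\<bar>(\<integral>x. f x \<partial>M) - (\<integral>x. g x \<partial>M)\<bar> = \<bar>\<integral>x. f x - g x \<partial>M\<bar>"
    using assms by simp
  also have "\<dots> \<le> (\<integral>x. \<bar>f x - g x\<bar> \<partial>M)"
    using integral_norm_bound[of M "\<lambda>x. f x - g x"] by simp
  also have "\<dots> \<le> \<epsilon>"
    using assms by (intro integral_le_const) auto
  finally show ?thesis .
qed

lemma setwise_conv_tendsto_integral: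
  fixes f :: "'a \<Rightarrow> real"
  assumes N: "\<And>m. prob_space (N m)" and sets_N: "\<And>m. sets (N m) = sets M"
    and M: "prob_space M" and conv: "setwise_conv N M"
    and f: "f \<in> borel_measurable M" and bound: "\<forall>x\<in>space M. \<bar>f x\<bar> \<le> B"
  shows "(\<lambda>m. \<integral>x. f x \<partial>N m) \<longlonglongrightarrow> (\<integral>x. f x \<partial>M)"
proof (rule tendstoI)
  fix r :: real assume "r > 0"
  then obtain g where g: "simple_function M g" and approx: "\<forall>x\<in>space M. \<bar>f x - g x\<bar> \<le> r / 3"
    using uniform_simple_function_approx[OF f bound, of "r / 3"] by auto
  have space_N: "space (N m) = space M" for m
    using sets_N by (rule sets_eq_imp_space_eq)
  have integrable: "integrable K f" "integrable K g" if "prob_space K" "sets K = sets M" for K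
  proof -
    interpret prob_space K by fact
    have space_K: "space K = space M"
      using \<open>sets K = sets M\<close> by (rule sets_eq_imp_space_eq)
    have "f \<in> borel_measurable K" "g \<in> borel_measurable K"
      using f borel_measurable_simple_function[OF g] measurable_cong_sets[OF \<open>sets K = sets M\<close> refl]
      by blast+
    moreover have "\<bar>g x\<bar> \<le> B + r / 3" if "x \<in> space M" for x
      using bound approx that by (smt (verit, best))
    ultimately show "integrable K f" "integrable K g"
      using bound space_K by (auto intro!: integrable_const_bound AE_I2)
  qed
  have close_N: "\<bar>(\<integral>x. f x \<partial>N m) - (\<integral>x. g x \<partial>N m)\<bar> \<le> r / 3" for m
    using prob_space.abs_integral_diff_le[OF N] integrable[OF N sets_N] approx space_N by metis
  have close_M: "\<bar>(\<integral>x. f x \<partial>M) - (\<integral>x. g x \<partial>M)\<bar> \<le> r / 3"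
    using prob_space.abs_integral_diff_le[OF M] integrable[OF M refl] approx by metis
  have "eventually (\<lambda>m. dist (\<integral>x. g x \<partial>N m) (\<integral>x. g x \<partial>M) < r / 3) sequentially"
    using setwise_conv_tendsto_integral_simple_function[OF _ sets_N _ conv g] N M \<open>r > 0\<close>
    by (intro tendstoD) (auto intro: prob_space.finite_measure)
  then show "eventually (\<lambda>m. dist (\<integral>x. f x \<partial>N m) (\<integral>x. f x \<partial>M) < r) sequentially"
  proof (rule eventually_mono)
    fix m assume "dist (\<integral>x. g x \<partial>N m) (\<integral>x. g x \<partial>M) < r / 3"
    with close_N[of m] close_M show "dist (\<integral>x. f x \<partial>N m) (\<integral>x. f x \<partial>M) < r"
      unfolding dist_real_def by linarith
  qed
qed

lemma limsup_INF_le_INF_lim: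
  fixes a :: "'i \<Rightarrow> nat \<Rightarrow> 'a::{complete_linorder, linorder_topology}"
  assumes "\<And>i. i \<in> I \<Longrightarrow> a i \<longlonglongrightarrow> b i"
  shows "limsup (\<lambda>m. INF i\<in>I. a i m) \<le> (INF i\<in>I. b i)"
proof (rule INF_greatest)
  fix i assume "i \<in> I"
  then have "limsup (\<lambda>m. INF i\<in>I. a i m) \<le> limsup (a i)"
    by (intro Limsup_mono always_eventually allI INF_lower)
  also have "\<dots> = b i"
    using assms[OF \<open>i \<in> I\<close>] by (intro lim_imp_Limsup) simp_all
  finally show "limsup (\<lambda>m. INF i\<in>I. a i m) \<le> b i" .
qed

lemma measurable_team_action_profile:
  assumes "team_policy n Y U \<gamma>"
  shows "(\<lambda>z. (fst z, \<lambda>i\<in>{..<n}. \<gamma> i (snd z i)))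
    \<in> info_space n Y \<rightarrow>\<^sub>M borel \<Otimes>\<^sub>M (\<Pi>\<^sub>M i\<in>{..<n}. Usp U i)"
  unfolding info_space_def
proof (intro measurable_Pair measurable_fst measurable_restrict)
  fix i assume "i \<in> {..<n}"
  then have "\<gamma> i \<in> Ysp Y i \<rightarrow>\<^sub>M Usp U i"
    using assms unfolding team_policy_def by blast
  moreover have "(\<lambda>z. snd z i) \<in> borel \<Otimes>\<^sub>M (\<Pi>\<^sub>M i\<in>{..<n}. Ysp Y i) \<rightarrow>\<^sub>M Ysp Y i"
    using \<open>i \<in> {..<n}\<close> by measurable
  ultimately show "(\<lambda>z. \<gamma> i (snd z i)) \<in> borel \<Otimes>\<^sub>M (\<Pi>\<^sub>M i\<in>{..<n}. Ysp Y i) \<rightarrow>\<^sub>M Usp U i"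
    by (rule measurable_compose[rotated])
qed

lemma team_cost_tendsto:
  assumes A1: "assumption_A1 n U c"
    and info_m: "\<forall>m. info_structure n Y (\<mu>s m)" and info: "info_structure n Y \<mu>"
    and conv: "setwise_conv \<mu>s \<mu>" and policy: "team_policy n Y U \<gamma>"
  shows "(\<lambda>m. team_cost n c (\<mu>s m) \<gamma>) \<longlonglongrightarrow> team_cost n c \<mu> \<gamma>"
proof -
  obtain B where
    c: "(\<lambda>(x, u). c x u) \<in> borel_measurable (borel \<Otimes>\<^sub>M (\<Pi>\<^sub>M i\<in>{..<n}. Usp U i))"
    and bound: "\<forall>x. \<forall>u\<in>(\<Pi>\<^sub>E i\<in>{..<n}. U i). \<bar>c x u\<bar> \<le> B"
    using A1 unfolding assumption_A1_def by blast
  have sets_\<mu>: "sets \<mu> = sets (info_space n Y)"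
    using info unfolding info_structure_def by blast
  let ?profile = "\<lambda>z. (fst z, \<lambda>i\<in>{..<n}. \<gamma> i (snd z i))"
  have profile: "?profile \<in> \<mu> \<rightarrow>\<^sub>M borel \<Otimes>\<^sub>M (\<Pi>\<^sub>M i\<in>{..<n}. Usp U i)"
    using measurable_team_action_profile[OF policy] measurable_cong_sets[OF sets_\<mu> refl] by blast
  have "(\<lambda>z. c (fst z) (\<lambda>i\<in>{..<n}. \<gamma> i (snd z i))) \<in> borel_measurable \<mu>"
    using measurable_compose[OF profile c] by simp
  moreover have "\<forall>z\<in>space \<mu>. \<bar>c (fst z) (\<lambda>i\<in>{..<n}. \<gamma> i (snd z i))\<bar> \<le> B"
    using measurable_space[OF profile] bound
    by (auto simp: space_pair_measure space_PiM space_restrict_space)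
  ultimately show ?thesis
    using info_m info conv sets_\<mu> unfolding team_cost_def info_structure_def
    by (intro setwise_conv_tendsto_integral) auto
qed

theorem theorem4p4:
  fixes n :: nat
    and Y :: "nat \<Rightarrow> 'y::polish_space set"
    and U :: "nat \<Rightarrow> 'u::polish_space set"
    and c :: "'x::polish_space \<Rightarrow> (nat \<Rightarrow> 'u) \<Rightarrow> real"
    and \<mu>s :: "nat \<Rightarrow> ('x \<times> (nat \<Rightarrow> 'y)) measure"
    and \<mu> :: "('x \<times> (nat \<Rightarrow> 'y)) measure"
  assumes Y_borel: "\<forall>i<n. Y i \<in> sets borel"
    and A1: "assumption_A1 n U c"
    and A4: "assumption_A4 n U"
    and A5: "assumption_A5 n U c"
    and info_m: "\<forall>m. info_structure n Y (\<mu>s m)"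
    and info: "info_structure n Y \<mu>"
    and A3_m: "\<forall>m. assumption_A3 n Y (\<mu>s m)"
    and A3: "assumption_A3 n Y \<mu>"
    and conv: "setwise_conv \<mu>s \<mu>"
  shows "limsup (\<lambda>m. team_value n Y U c (\<mu>s m)) \<le> team_value n Y U c \<mu>"
proof -
  have "(\<lambda>m. ereal (team_cost n c (\<mu>s m) \<gamma>)) \<longlonglongrightarrow> ereal (team_cost n c \<mu> \<gamma>)"
    if "team_policy n Y U \<gamma>" for \<gamma>
    using team_cost_tendsto[OF A1 info_m info conv that] by (rule tendsto_ereal)
  then show ?thesis
    unfolding team_value_def by (intro limsup_INF_le_INF_lim) simp
qed

end
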